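(* Let $H$ be a finite group of odd order such that $d(\mathbb{Z}_2\times H)=2$. Then $\mathsf{GEN}(\mathbb{Z}_2\times H)=*0$.
   Context: For a finite group $G$, $\mathsf{GEN}(G)$ is the following impartial two-player game. A position is a set of elements selected so far; the starting position is $\emptyset$. From a position $P$ with $\langle P\rangle\neq G$, the player to move selects some $g\in G\setminus P$, producing the position $P\cup\{g\}$ (these are the options of $P$); a position $P$ with $\langle P\rangle = G$ has no options. The nim-number of a position is defined recursively by $\operatorname{nim}(P)=\operatorname{mex}\{\operatorname{nim}(Q): Q \text{ an option of } P\}$, where $\operatorname{mex}(A)$ is the least nonnegative integer not in $A$. We write $\mathsf{GEN}(G)=*n$ if $\operatorname{nim}(\emptyset)=n$. $d(G)$ denotes the minimum size of a generating set of $G$; $\mathbb{Z}_2$ is the cyclic group of order $2$. *)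

theory Defs
  imports "HOL-Algebra.Algebra"
begin

definition mex :: "nat set \<Rightarrow> nat" where
  "mex A = (LEAST n. n \<notin> A)"

text \<open>A position P (a subset of the carrier) with generate G P = carrier G has no options;
  otherwise the options are P \<union> {g} for g in carrier G - P.
  Outside the meaningful domain (infinite carrier, P not a subset of the carrier)
  the value is the junk value 0.\<close>
function gen_nim :: "('a, 'b) monoid_scheme \<Rightarrow> 'a set \<Rightarrow> nat" where
  "gen_nim G P =
     (if finite (carrier G) \<and> P \<subseteq> carrier G \<and> generate G P \<noteq> carrier G
      then mex ((\<lambda>g. gen_nim G (insert g P)) ` (carrier G - P))
      else 0)"
  by auto
termination
proof (relation "measure (\<lambda>(G, P). card (carrier G - P))", simp)
  fix G :: "('a, 'b) monoid_scheme" and P x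
  assume h: "finite (carrier G) \<and> P \<subseteq> carrier G \<and> generate G P \<noteq> carrier G"
    and x: "x \<in> carrier G - P"
  have "carrier G - insert x P \<subset> carrier G - P" using x by auto
  then have "card (carrier G - insert x P) < card (carrier G - P)"
    using h by (simp add: psubset_card_mono)
  then show "((G, insert x P), G, P) \<in> measure (\<lambda>(G, P). card (carrier G - P))"
    by simp
qed

text \<open>GEN(G) = *n iff the nim-number of the empty position is n.\<close>
definition GEN_value :: "('a, 'b) monoid_scheme \<Rightarrow> nat" where
  "GEN_value G = gen_nim G {}"

definition min_gen_size :: "('a, 'b) monoid_scheme \<Rightarrow> nat" where
  "min_gen_size G =
     (LEAST n. \<exists>S. S \<subseteq> carrier G \<and> finite S \<and> card S = n \<and> generate G S = carrier G)"

end

theory Submission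
  imports Defs
begin

text \<open>Write \<open>G = \<int>\<^sub>2 \<times> H\<close> and \<open>t = (1, 1)\<close>. Pairing each element \<open>x\<close> with \<open>x t\<close> gives the second
  player a strategy: answer every move \<open>x\<close> by \<open>x t\<close>, unless the first player's move can be
  completed to a generating set at once. Since \<open>|H|\<close> is odd, \<open>t\<close> is a power of every element
  \<open>(1, h)\<close>, so adding \<open>t\<close> to a set never helps generate \<open>G\<close> beyond replacing one element
  \<open>y\<close> by \<open>y t\<close>. Hence after each answer no single further move generates \<open>G\<close>, the first
  player never gets to make the last move, and because \<open>d(G) = 2\<close> this invariant already
  holds at the empty position.\<close>

declare gen_nim.simps [simp del]

lemma mex_eq_0_iff:
  assumes "finite A"
  shows "mex A = 0 \<longleftrightarrow> 0 \<notin> A"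
proof
  assume "mex A = 0"
  obtain n :: nat where "n \<notin> A"
    using assms ex_new_if_finite infinite_UNIV_nat by blast
  then have "(LEAST n. n \<notin> A) \<notin> A" by (rule LeastI)
  then show "0 \<notin> A" using \<open>mex A = 0\<close> unfolding mex_def by simp
next
  assume "0 \<notin> A"
  then show "mex A = 0" unfolding mex_def by (rule Least_eq_0)
qed

lemma gen_nim_generating:
  assumes "generate G P = carrier G"
  shows "gen_nim G P = 0"
  using assms by (subst gen_nim.simps) simp

lemma gen_nim_eq_0_iff:
  assumes "finite (carrier G)" "P \<subseteq> carrier G" "generate G P \<noteq> carrier G"
  shows "gen_nim G P = 0 \<longleftrightarrow> (\<forall>g\<in>carrier G - P. gen_nim G (insert g P) \<noteq> 0)"
proof -
  let ?A = "(\<lambda>g. gen_nim G (insert g P)) ` (carrier G - P)"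
  have "gen_nim G P = mex ?A"
    using assms by (subst gen_nim.simps) simp
  moreover have "finite ?A" using assms(1) by blast
  ultimately have "gen_nim G P = 0 \<longleftrightarrow> 0 \<notin> ?A" by (simp add: mex_eq_0_iff)
  then show ?thesis by (metis (no_types, lifting) image_iff)
qed

lemma min_gen_size_le_card:
  assumes "S \<subseteq> carrier G" "finite S" "generate G S = carrier G"
  shows "min_gen_size G \<le> card S"
  unfolding min_gen_size_def using assms by (intro Least_le) blast

lemma (in group) generate_eq_carrier_if_subset_generate:
  assumes "B \<subseteq> carrier G" "A \<subseteq> generate G B" "generate G A = carrier G"
  shows "generate G B = carrier G"
  using generate_subgroup_incl[OF assms(2) generate_is_subgroup[OF assms(1)]]
    generate_incl[OF assms(1)] assms(3)
  by blast

text \<open>The hypothesis \<open>completion\<close> says that answering \<open>x\<close> by \<open>\<sigma> x\<close> never creates a one-move win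
  that was not already available after \<open>x\<close>.\<close>

lemma (in group) gen_nim_eq_0_if_pairing:
  assumes fin: "finite (carrier G)"
    and \<sigma>_closed: "\<And>x. x \<in> carrier G \<Longrightarrow> \<sigma> x \<in> carrier G"
    and \<sigma>_involution: "\<And>x. x \<in> carrier G \<Longrightarrow> \<sigma> (\<sigma> x) = x"
    and \<sigma>_no_fixpoint: "\<And>x. x \<in> carrier G \<Longrightarrow> \<sigma> x \<noteq> x"
    and completion: "\<And>Q x y. \<lbrakk>Q \<subseteq> carrier G; x \<in> carrier G; y \<in> carrier G;
        generate G (insert y (insert (\<sigma> x) (insert x Q))) = carrier G\<rbrakk>
        \<Longrightarrow> \<exists>z\<in>{y, \<sigma> y}. generate G (insert z (insert x Q)) = carrier G"
    and "P \<subseteq> carrier G" "\<And>x. x \<in> P \<Longrightarrow> \<sigma> x \<in> P"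
    and "\<And>y. y \<in> carrier G \<Longrightarrow> generate G (insert y P) \<noteq> carrier G"
  shows "gen_nim G P = 0"
  using assms(6-)
proof (induction "card (carrier G - P)" arbitrary: P rule: less_induct)
  case less
  have P_not_generating: "generate G P \<noteq> carrier G"
    using less.prems(3)[OF one_closed] mono_generate[of P "insert \<one> P"]
      generate_incl[of "insert \<one> P"] less.prems(1)
    by blast
  show ?case
  proof (subst gen_nim_eq_0_iff[OF fin less.prems(1) P_not_generating], intro ballI)
    fix x assume x: "x \<in> carrier G - P"
    define D where "D = insert x P"
    have D: "D \<subseteq> carrier G" "generate G D \<noteq> carrier G"
      using x less.prems(1,3) by (auto simp: D_def)
    have "\<exists>g\<in>carrier G - D. gen_nim G (insert g D) = 0"
    proof (cases "\<exists>z\<in>carrier G. generate G (insert z D) = carrier G")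
      case True
      then obtain z where z: "z \<in> carrier G" "generate G (insert z D) = carrier G" by blast
      have "z \<notin> D" using z(2) D(2) by (metis insert_absorb)
      moreover have "gen_nim G (insert z D) = 0" using z(2) by (rule gen_nim_generating)
      ultimately show ?thesis using z(1) by blast
    next
      case no_win: False
      have "\<sigma> x \<notin> P"
      proof
        assume "\<sigma> x \<in> P"
        then have "\<sigma> (\<sigma> x) \<in> P" by (rule less.prems(2))
        with x \<sigma>_involution show False by simp
      qed
      then have \<sigma>x: "\<sigma> x \<in> carrier G - D"
        using x \<sigma>_closed \<sigma>_no_fixpoint by (simp add: D_def)
      have "gen_nim G (insert (\<sigma> x) D) = 0"
      proof (rule less.hyps)
        have "carrier G - insert (\<sigma> x) D \<subset> carrier G - P"
          using x by (auto simp: D_def)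
        then show "card (carrier G - insert (\<sigma> x) D) < card (carrier G - P)"
          using fin by (simp add: psubset_card_mono)
        show "insert (\<sigma> x) D \<subseteq> carrier G" using \<sigma>x D(1) by blast
        show "\<sigma> w \<in> insert (\<sigma> x) D" if "w \<in> insert (\<sigma> x) D" for w
          using that x less.prems(2) \<sigma>_involution by (auto simp: D_def)
        show "generate G (insert y (insert (\<sigma> x) D)) \<noteq> carrier G" if y: "y \<in> carrier G" for y
        proof
          assume "generate G (insert y (insert (\<sigma> x) D)) = carrier G"
          then obtain z where "z \<in> {y, \<sigma> y}" "generate G (insert z D) = carrier G"
            using completion[OF less.prems(1) _ y, of x] x by (auto simp: D_def)
          with no_win y \<sigma>_closed show False by blast
        qed
      qed
      then show ?thesis using \<sigma>x by blast
    qed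
    then show "gen_nim G (insert x P) \<noteq> 0"
      unfolding D_def[symmetric] gen_nim_eq_0_iff[OF fin D] by blast
  qed
qed

lemma DirProd_nat_pow:
  "(a, b) [^]\<^bsub>G \<times>\<times> H\<^esub> (n::nat) = (a [^]\<^bsub>G\<^esub> n, b [^]\<^bsub>H\<^esub> n)"
  by (induction n) simp_all

lemma carrier_integer_mod_group_2 [simp]: "carrier (integer_mod_group 2) = {0, 1}"
  by (auto simp: carrier_integer_mod_group)

locale Z2_times_odd_group =
  fixes H :: "('a, 'b) monoid_scheme"
  assumes group_H: "group H" and finite_H: "finite (carrier H)" and odd_order_H: "odd (order H)"
begin

abbreviation "G \<equiv> integer_mod_group 2 \<times>\<times> H"
abbreviation "t \<equiv> ((1::int), \<one>\<^bsub>H\<^esub>)"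

sublocale H: group H
  by (rule group_H)

sublocale G: group G
  by (rule DirProd_group[OF group_integer_mod_group group_H])

lemma finite_carrier_G: "finite (carrier G)"
  using finite_H by simp

lemma t_closed: "t \<in> carrier G"
  by simp

lemma mult_t: "x \<in> carrier G \<Longrightarrow> x \<otimes>\<^bsub>G\<^esub> t = ((fst x + 1) mod 2, snd x)"
  by auto

lemma mult_t_closed: "x \<in> carrier G \<Longrightarrow> x \<otimes>\<^bsub>G\<^esub> t \<in> carrier G"
  by (auto simp: mult_t)

lemma mult_t_t: "x \<in> carrier G \<Longrightarrow> x \<otimes>\<^bsub>G\<^esub> t \<otimes>\<^bsub>G\<^esub> t = x"
  by (auto simp: mult_t mult_t_closed)

lemma mult_t_neq: "x \<in> carrier G \<Longrightarrow> x \<otimes>\<^bsub>G\<^esub> t \<noteq> x"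
  by (auto simp: mult_t)

lemma nat_pow_order_eq_t:
  assumes "(1, h) \<in> carrier G"
  shows "(1, h) [^]\<^bsub>G\<^esub> order H = t"
proof -
  have "h [^]\<^bsub>H\<^esub> order H = \<one>\<^bsub>H\<^esub>"
    using assms H.pow_order_eq_1 by simp
  moreover have "(int (order H) * 1) mod 2 = 1"
    using odd_order_H by presburger
  ultimately show ?thesis by (simp add: DirProd_nat_pow)
qed

lemma generate_eq_carrier_drop_t:
  assumes "E \<subseteq> carrier G" "e \<in> E" "fst e = 1" "generate G (insert t E) = carrier G"
  shows "generate G E = carrier G"
proof -
  obtain h where e: "e = (1, h)" using assms(3) by (cases e) auto
  have "e [^]\<^bsub>G\<^esub> int (order H) \<in> generate G E"
    by (rule G.subgroup_int_pow_closed[OF G.generate_is_subgroup[OF assms(1)] generate.incl[OF assms(2)]])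
  moreover have "e [^]\<^bsub>G\<^esub> int (order H) = t"
    using assms(1,2) nat_pow_order_eq_t by (auto simp: e int_pow_int)
  ultimately have "insert t E \<subseteq> generate G E" by (auto intro: generate.incl)
  then show ?thesis
    by (rule G.generate_eq_carrier_if_subset_generate[OF assms(1) _ assms(4)])
qed

lemma generate_eq_carrier_replace_t:
  assumes "D \<subseteq> carrier G" "y \<in> carrier G" "generate G (insert t (insert y D)) = carrier G"
  shows "\<exists>z\<in>{y, y \<otimes>\<^bsub>G\<^esub> t}. generate G (insert z D) = carrier G"
proof (cases "\<exists>e\<in>insert y D. fst e = 1")
  case True
  then obtain e where "e \<in> insert y D" "fst e = 1" by blast
  moreover have "insert y D \<subseteq> carrier G" using assms(1,2) by blast
  ultimately have "generate G (insert y D) = carrier G"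
    using generate_eq_carrier_drop_t assms(3) by blast
  then show ?thesis by blast
next
  case False
  define z where "z = y \<otimes>\<^bsub>G\<^esub> t"
  have z: "z \<in> carrier G" "fst z = 1"
    using False assms(2) by (auto simp: z_def mult_t)
  have "z \<otimes>\<^bsub>G\<^esub> t \<in> generate G (insert t (insert z D))"
    by (intro generate.eng generate.incl) auto
  then have "y \<in> generate G (insert t (insert z D))"
    using mult_t_t[OF assms(2)] by (simp add: z_def)
  then have "insert t (insert y D) \<subseteq> generate G (insert t (insert z D))"
    by (auto intro: generate.incl)
  moreover have "insert t (insert z D) \<subseteq> carrier G"
    using assms(1) z(1) t_closed by blast
  ultimately have "generate G (insert t (insert z D)) = carrier G"
    using G.generate_eq_carrier_if_subset_generate assms(3) by blast
  then have "generate G (insert z D) = carrier G"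
    using generate_eq_carrier_drop_t[of "insert z D" z] assms(1) z by blast
  then show ?thesis by (simp add: z_def)
qed

lemma gen_nim_eq_0_if_closed_under_t:
  assumes "P \<subseteq> carrier G" "\<And>x. x \<in> P \<Longrightarrow> x \<otimes>\<^bsub>G\<^esub> t \<in> P"
    and "\<And>y. y \<in> carrier G \<Longrightarrow> generate G (insert y P) \<noteq> carrier G"
  shows "gen_nim G P = 0"
proof (rule G.gen_nim_eq_0_if_pairing[where \<sigma> = "\<lambda>x. x \<otimes>\<^bsub>G\<^esub> t"])
  fix Q x y
  assume Q: "Q \<subseteq> carrier G" and x: "x \<in> carrier G" and y: "y \<in> carrier G"
    and gen: "generate G (insert y (insert (x \<otimes>\<^bsub>G\<^esub> t) (insert x Q))) = carrier G"
  let ?S = "insert t (insert y (insert x Q))"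
  have "x \<otimes>\<^bsub>G\<^esub> t \<in> generate G ?S"
    by (intro generate.eng generate.incl) auto
  then have "insert y (insert (x \<otimes>\<^bsub>G\<^esub> t) (insert x Q)) \<subseteq> generate G ?S"
    by (auto intro: generate.incl)
  then have "generate G ?S = carrier G"
    using Q x y by (intro G.generate_eq_carrier_if_subset_generate[OF _ _ gen]) auto
  then show "\<exists>z\<in>{y, y \<otimes>\<^bsub>G\<^esub> t}. generate G (insert z (insert x Q)) = carrier G"
    using Q x y by (intro generate_eq_carrier_replace_t) auto
qed (fact finite_carrier_G mult_t_closed mult_t_t mult_t_neq assms)+

end

theorem proposition4p9:
  fixes H :: "('a, 'b) monoid_scheme"
  assumes "group H"
    and "finite (carrier H)"
    and "odd (order H)"
    and "min_gen_size (integer_mod_group 2 \<times>\<times> H) = 2"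
  shows "GEN_value (integer_mod_group 2 \<times>\<times> H) = 0"
proof -
  interpret Z2_times_odd_group H
    using assms(1-3) by (rule Z2_times_odd_group.intro)
  have "generate G {y} \<noteq> carrier G" if "y \<in> carrier G" for y
    using min_gen_size_le_card[of "{y}" G] that assms(4) by auto
  then have "gen_nim G {} = 0"
    by (intro gen_nim_eq_0_if_closed_under_t) auto
  then show ?thesis unfolding GEN_value_def .
qed

end
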